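(* Let $1\le p<\infty$ and let $f\in BV_p[0,1]$ take values in $[0,1]$. For every $\varepsilon>0$ there exists $\eta>0$ such that whenever $0\le x_1<x_2<\dots<x_m\le1$ and $f(x_j)<\eta$ for all $j=1,\dots,m$, one has $\left(\sum_{j=1}^{m-1}|f(x_{j+1})-f(x_j)|^p\right)^{1/p}<\varepsilon$.
   Context: For $1\le p<\infty$, $BV_p[0,1]$ is the set of functions $f:[0,1]\to\mathbb F$ ($\mathbb F\in\{\mathbb R,\mathbb C\}$) with finite total Wiener $p$-variation $\operatorname{Var}_p(f,[0,1]):=\sup\sum_{j=1}^m|f(t_j)-f(t_{j-1})|^p$, the supremum over all partitions $0=t_0<t_1<\dots<t_m=1$. *)

theory Defs
  imports "HOL-Analysis.Analysis"
begin

definition partition01 :: "(nat \<Rightarrow> real) \<Rightarrow> nat \<Rightarrow> bool" where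
  "partition01 t m \<longleftrightarrow> t 0 = 0 \<and> t m = 1 \<and> (\<forall>j<m. t j < t (Suc j))"

definition pvar_sums :: "real \<Rightarrow> (real \<Rightarrow> 'a::real_normed_vector) \<Rightarrow> real set" where
  "pvar_sums p f = {(\<Sum>j\<in>{1..m}. norm (f (t j) - f (t (j - 1))) powr p) | t m. partition01 t m}"

definition Var_p :: "real \<Rightarrow> (real \<Rightarrow> 'a::real_normed_vector) \<Rightarrow> real" where
  "Var_p p f = Sup (pvar_sums p f)"

definition BV_p :: "real \<Rightarrow> (real \<Rightarrow> 'a::real_normed_vector) \<Rightarrow> bool" where
  "BV_p p f \<longleftrightarrow> bdd_above (pvar_sums p f)"

end

theory Submission
  imports Defs
begin

text \<open>Choose a partition \<open>P\<close> of \<open>[0,1]\<close> whose \<open>p\<close>-variation sum is within \<open>\<delta>/2\<close> of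
  \<open>Var_p p f\<close> and insert the points \<open>x\<^sub>j\<close>, at which \<open>f < \<eta>\<close>, into it. Since \<open>f\<close> takes values
  in \<open>[0,1]\<close>, convexity of \<open>t powr p\<close> shows that replacing an endpoint of a jump by a point
  where \<open>f < \<eta>\<close> lowers the jump term by at most \<open>p \<eta>\<close>, and the terms of the \<open>x\<^sub>j\<close>-sum lost
  by the refinement (those straddling a point of \<open>P\<close>) are at most \<open>\<eta>\<close> each. So the refined
  sum, which is at most \<open>Var_p p f\<close>, exceeds the \<open>P\<close>-sum plus the \<open>x\<^sub>j\<close>-sum minus
  \<open>(p + 1) \<eta> |P|\<close>, and taking \<open>\<eta>\<close> small makes the \<open>x\<^sub>j\<close>-sum less than \<open>\<delta>\<close>.\<close>

lemma sorted_set_subset_hd_last: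
  fixes xs :: "'a::linorder list"
  shows "sorted xs \<Longrightarrow> set xs \<subseteq> {hd xs..last xs}"
proof (induction xs)
  case (Cons a xs)
  then show ?case by (cases xs) fastforce+
qed simp

lemma set_dropWhile_less_ge:
  fixes xs :: "'a::linorder list"
  shows "sorted xs \<Longrightarrow> x \<in> set (dropWhile (\<lambda>y. y < t) xs) \<Longrightarrow> t \<le> x"
  by (induction xs) (auto split: if_splits)

lemma successively_less_remdups_adj:
  fixes xs :: "'a::linorder list"
  assumes "sorted xs"
  shows "successively (<) (remdups_adj xs)"
proof -
  have "successively (\<le>) (remdups_adj xs)"
    using assms by (intro successively_remdups_adjI) (simp add: successively_if_sorted_wrt)
  moreover have "successively (\<noteq>) (remdups_adj xs)"
    using distinct_adj_remdups_adj unfolding distinct_adj_def .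
  ultimately show ?thesis by (auto simp: successively_conv_nth order.strict_iff_order)
qed

fun pvar_list :: "real \<Rightarrow> (real \<Rightarrow> 'a::real_normed_vector) \<Rightarrow> real list \<Rightarrow> real" where
  "pvar_list p f (a # b # xs) = norm (f b - f a) powr p + pvar_list p f (b # xs)"
| "pvar_list p f _ = 0"

lemma pvar_list_append:
  "pvar_list p f (xs @ ys) = pvar_list p f xs + pvar_list p f ys +
     (if xs \<noteq> [] \<and> ys \<noteq> [] then norm (f (hd ys) - f (last xs)) powr p else 0)"
proof (induction xs rule: induct_list012)
  case (2 x)
  then show ?case by (cases ys) auto
qed simp_all

lemma pvar_list_conv_sum:
  "pvar_list p f xs = (\<Sum>j<length xs - 1. norm (f (xs ! Suc j) - f (xs ! j)) powr p)"
proof (induction xs rule: induct_list012)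
  case (3 x y zs)
  have "(\<Sum>j<length (x # y # zs) - 1. norm (f ((x # y # zs) ! Suc j) - f ((x # y # zs) ! j)) powr p)
      = norm (f y - f x) powr p
        + (\<Sum>j<length (y # zs) - 1. norm (f ((y # zs) ! Suc j) - f ((y # zs) ! j)) powr p)"
    by (simp add: sum.lessThan_Suc_shift del: sum.lessThan_Suc)
  then show ?case using 3 by simp
qed simp_all

lemma pvar_list_map_upt:
  "pvar_list p f (map x [1..<Suc m]) = (\<Sum>j\<in>{1..<m}. norm (f (x (Suc j)) - f (x j)) powr p)"
proof (cases m)
  case (Suc k)
  then show ?thesis
    using sum_bounds_lt_plus1[of "\<lambda>j. norm (f (x (Suc j)) - f (x j)) powr p" k]
    unfolding pvar_list_conv_sum by (simp add: atLeastLessThanSuc_atLeastAtMost nth_map_upt del: upt_Suc)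
qed simp

lemma pvar_list_remdups_adj: "pvar_list p f (remdups_adj xs) = pvar_list p f xs"
proof (induction xs rule: remdups_adj.induct)
  case (3 x y xs)
  show ?case
  proof (cases "x = y")
    case False
    then have "remdups_adj (x # y # xs) = x # y # tl (remdups_adj (y # xs))"
      by (metis remdups_adj.simps(3) remdups_adj_Cons_alt)
    then show ?thesis
      using "3.IH"(2)[OF False] by (metis pvar_list.simps(1) remdups_adj_Cons_alt)
  qed (use "3.IH"(1) in simp)
qed simp_all

lemma pvar_list_const: "set xs \<subseteq> {c} \<Longrightarrow> pvar_list p f xs = 0"
  by (induction p f xs rule: pvar_list.induct) auto

lemma pvar_sums_conv_pvar_list:
  "pvar_sums p f = {pvar_list p f Q | Q. successively (<) Q \<and> Q \<noteq> [] \<and> hd Q = 0 \<and> last Q = 1}"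
proof (intro equalityI subsetI)
  fix s assume "s \<in> pvar_sums p f"
  then obtain t m where t: "partition01 t m"
    and s: "s = (\<Sum>j\<in>{1..m}. norm (f (t j) - f (t (j - 1))) powr p)"
    unfolding pvar_sums_def by blast
  define Q where "Q = map t [0..<Suc m]"
  have "successively (<) Q" "Q \<noteq> []" "hd Q = 0" "last Q = 1"
    using t unfolding Q_def partition01_def
    by (auto simp: successively_conv_nth hd_map last_map simp del: upt_Suc)
  moreover have "s = pvar_list p f Q"
    unfolding s pvar_list_conv_sum sum_bounds_lt_plus1[symmetric] by (simp add: Q_def del: upt_Suc)
  ultimately show "s \<in> {pvar_list p f Q | Q. successively (<) Q \<and> Q \<noteq> [] \<and> hd Q = 0 \<and> last Q = 1}"
    by blast
next
  fix s assume "s \<in> {pvar_list p f Q | Q. successively (<) Q \<and> Q \<noteq> [] \<and> hd Q = 0 \<and> last Q = 1}"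
  then obtain Q where Q: "successively (<) Q" "Q \<noteq> []" "hd Q = 0" "last Q = 1"
    and s: "s = pvar_list p f Q" by blast
  have "partition01 (\<lambda>j. Q ! j) (length Q - 1)"
    using Q unfolding partition01_def by (auto simp: hd_conv_nth last_conv_nth successively_conv_nth)
  moreover have "s = (\<Sum>j\<in>{1..length Q - 1}. norm (f (Q ! j) - f (Q ! (j - 1))) powr p)"
    unfolding s pvar_list_conv_sum sum_bounds_lt_plus1[symmetric] by simp
  ultimately show "s \<in> pvar_sums p f" unfolding pvar_sums_def by blast
qed

lemma pvar_list_le_Var_p:
  assumes "BV_p p f" "successively (<) Q" "Q \<noteq> []" "hd Q = 0" "last Q = 1"
  shows "pvar_list p f Q \<le> Var_p p f"
  using assms unfolding BV_p_def Var_p_def pvar_sums_conv_pvar_list by (blast intro: cSup_upper)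

lemma Var_p_less_pvar_list:
  assumes "0 < \<delta>"
  obtains Q where "successively (<) Q" "Q \<noteq> []" "hd Q = 0" "last Q = 1"
    "Var_p p f - \<delta> < pvar_list p f Q"
proof -
  have "pvar_list p f [0, 1] \<in> pvar_sums p f"
    unfolding pvar_sums_conv_pvar_list by (intro CollectI exI[of _ "[0, 1]"]) simp
  then have "pvar_sums p f \<noteq> {}" by blast
  then obtain s where "s \<in> pvar_sums p f" "Var_p p f - \<delta> < s"
    using less_cSupD[of "pvar_sums p f" "Var_p p f - \<delta>"] assms unfolding Var_p_def by auto
  then show ?thesis using that unfolding pvar_sums_conv_pvar_list by blast
qed

lemma powr_le_abs_diff_powr_add:
  fixes w y \<eta> p :: real
  assumes "1 \<le> p" "0 \<le> w" "w \<le> 1" "0 \<le> y" "y < \<eta>"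
  shows "w powr p \<le> \<bar>w - y\<bar> powr p + p * \<eta>"
proof (cases "w \<le> \<eta>")
  case True
  have "w powr p \<le> w"
    using assms powr_le_one_le[of w p] by (cases "w = 0") auto
  also have "\<dots> \<le> p * \<eta>" using True assms by (smt (verit) mult_le_cancel_right1)
  finally show ?thesis by (smt (verit) powr_ge_zero)
next
  case False
  then have w: "0 < w" "0 < w - \<eta>" using assms by auto
  have deriv: "((\<lambda>x. x powr p) has_field_derivative p * w powr (p - 1)) (at w within {0<..})"
    using has_real_derivative_powr[OF w(1)] by (rule has_field_derivative_at_within)
  \<comment> \<open>convexity of \<open>x powr p\<close>: the graph lies above its tangent at \<open>w\<close>, whose slope is at most \<open>p\<close>\<close>
  have "p * w powr (p - 1) * ((w - \<eta>) - w) \<le> (w - \<eta>) powr p - w powr p"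
    using w by (intro convex_on_imp_above_tangent[OF powr_convex[OF assms(1)] _ _ _ deriv])
      (auto simp: interior_open)
  moreover have "p * w powr (p - 1) * \<eta> \<le> p * \<eta>"
    using assms powr_le1[of "p - 1" w] by (intro mult_right_mono) auto
  moreover have "(w - \<eta>) powr p \<le> \<bar>w - y\<bar> powr p"
    using w assms by (intro powr_mono2) auto
  ultimately show ?thesis by (simp add: algebra_simps)
qed

lemma abs_diff_powr_le_via_small:
  fixes u v y z \<eta> p :: real
  assumes "1 \<le> p" "u \<in> {0..1}" "v \<in> {0..1}" "y \<in> {0..<\<eta>}" "z \<in> {0..<\<eta>}"
  shows "\<bar>v - u\<bar> powr p \<le> \<bar>y - u\<bar> powr p + \<bar>v - z\<bar> powr p + p * \<eta>"
proof (cases "v \<le> u")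
  case True
  have "\<bar>v - u\<bar> powr p \<le> u powr p" using True assms by (intro powr_mono2) auto
  also have "\<dots> \<le> \<bar>u - y\<bar> powr p + p * \<eta>" using assms by (intro powr_le_abs_diff_powr_add) auto
  finally show ?thesis by (smt (verit) abs_minus_commute powr_ge_zero)
next
  case False
  have "\<bar>v - u\<bar> powr p \<le> v powr p" using False assms by (intro powr_mono2) auto
  also have "\<dots> \<le> \<bar>v - z\<bar> powr p + p * \<eta>" using assms by (intro powr_le_abs_diff_powr_add) auto
  finally show ?thesis using powr_ge_zero[of "\<bar>y - u\<bar>" p] by linarith
qed

lemma abs_diff_powr_le_small:
  fixes a b \<eta> p :: real
  assumes "1 \<le> p" "a \<in> {0..<\<eta>}" "b \<in> {0..<\<eta>}" "\<eta> \<le> 1"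
  shows "\<bar>a - b\<bar> powr p \<le> \<eta>"
proof -
  have "\<bar>a - b\<bar> powr p \<le> \<bar>a - b\<bar>"
    using assms by (cases "a = b") (auto intro: powr_le_one_le)
  also have "\<dots> \<le> \<eta>" using assms by auto
  finally show ?thesis .
qed

lemma pvar_list_detour_ge:
  fixes f :: "real \<Rightarrow> real"
  assumes "1 \<le> p" "0 \<le> \<eta>" "f a \<in> {0..1}" "f b \<in> {0..1}" "f ` set cs \<subseteq> {0..<\<eta>}"
  shows "\<bar>f b - f a\<bar> powr p + pvar_list p f cs \<le> pvar_list p f (a # cs @ [b]) + p * \<eta>"
proof (cases "cs = []")
  case False
  have "pvar_list p f (a # cs @ [b])
      = \<bar>f (hd cs) - f a\<bar> powr p + pvar_list p f cs + \<bar>f b - f (last cs)\<bar> powr p"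
    using pvar_list_append[of p f "[a]" "cs @ [b]"] pvar_list_append[of p f cs "[b]"] False by simp
  moreover have "f (hd cs) \<in> {0..<\<eta>}" "f (last cs) \<in> {0..<\<eta>}"
    using assms(5) hd_in_set[OF False] last_in_set[OF False] by auto
  then have "\<bar>f b - f a\<bar> powr p \<le> \<bar>f (hd cs) - f a\<bar> powr p + \<bar>f b - f (last cs)\<bar> powr p + p * \<eta>"
    using assms by (intro abs_diff_powr_le_via_small) auto
  ultimately show ?thesis by linarith
qed (use assms in simp)

lemma pvar_list_append_small_le:
  fixes f :: "real \<Rightarrow> real"
  assumes "1 \<le> p" "0 \<le> \<eta>" "\<eta> \<le> 1" "f ` set xs \<subseteq> {0..<\<eta>}" "f ` set ys \<subseteq> {0..<\<eta>}"
  shows "pvar_list p f (xs @ ys) \<le> pvar_list p f xs + pvar_list p f ys + \<eta>"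
proof -
  have "xs \<noteq> [] \<Longrightarrow> ys \<noteq> [] \<Longrightarrow> \<bar>f (hd ys) - f (last xs)\<bar> powr p \<le> \<eta>"
    using assms by (intro abs_diff_powr_le_small) (auto simp: image_subset_iff hd_in_set last_in_set)
  then show ?thesis unfolding pvar_list_append using assms(2) by auto
qed

lemma pvar_list_refinement_ge:
  fixes f :: "real \<Rightarrow> real" and P C :: "real list"
  assumes p: "1 \<le> p" and \<eta>: "0 < \<eta>" "\<eta> \<le> 1"
    and "sorted P" "P \<noteq> []" "f ` set P \<subseteq> {0..1}"
    and "sorted C" "set C \<subseteq> {hd P..last P}" "f ` set C \<subseteq> {0..<\<eta>}"
  shows "\<exists>Q. sorted Q \<and> Q \<noteq> [] \<and> hd Q = hd P \<and> last Q = last P \<and>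
    pvar_list p f P + pvar_list p f C \<le> pvar_list p f Q + (p + 1) * \<eta> * length P"
  using assms(4-)
proof (induction P arbitrary: C rule: induct_list012)
  case (2 t0)
  then have "pvar_list p f C = 0" by (intro pvar_list_const) auto
  then show ?case using p \<eta> by (intro exI[of _ "[t0]"]) auto
next
  case (3 t0 t1 P)
  define C1 where "C1 = takeWhile (\<lambda>x. x < t1) C"
  define C2 where "C2 = dropWhile (\<lambda>x. x < t1) C"
  have C_split: "C = C1 @ C2" unfolding C1_def C2_def by simp
  have "sorted C1" unfolding C1_def using "3.prems"(4) by (rule sorted_takeWhile)
  have C1: "set C1 \<subseteq> {t0..<t1}" "f ` set C1 \<subseteq> {0..<\<eta>}"
    using "3.prems"(5,6) unfolding C1_def by (fastforce dest: set_takeWhileD)+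
  have "sorted C2" unfolding C2_def using "3.prems"(4) by (rule sorted_dropWhile)
  have "set C2 \<subseteq> set C" "\<forall>x\<in>set C2. t1 \<le> x"
    using set_dropWhile_less_ge[OF "3.prems"(4)] unfolding C2_def by (auto dest: set_dropWhileD)
  then have C2: "set C2 \<subseteq> {hd (t1 # P)..last (t1 # P)}" "f ` set C2 \<subseteq> {0..<\<eta>}"
    using "3.prems"(5,6) by (auto simp: subset_iff)
  obtain Q2 where Q2: "sorted Q2" "Q2 \<noteq> []" "hd Q2 = t1" "last Q2 = last (t1 # P)"
    and Q2_ge: "pvar_list p f (t1 # P) + pvar_list p f C2
                  \<le> pvar_list p f Q2 + (p + 1) * \<eta> * length (t1 # P)"
    using "3.IH"(2)[OF _ _ _ \<open>sorted C2\<close> C2] "3.prems"(1,3) by auto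
  define Q where "Q = t0 # C1 @ Q2"
  have "\<forall>y\<in>set Q2. t1 \<le> y" using Q2(1-3) by (cases Q2) auto
  then have "sorted Q"
    using \<open>sorted C1\<close> C1(1) Q2(1) "3.prems"(1) unfolding Q_def by (fastforce simp: sorted_append)
  have "pvar_list p f Q = pvar_list p f (t0 # C1 @ [t1]) + pvar_list p f Q2"
    using pvar_list_append[of p f "t0 # C1" Q2] pvar_list_append[of p f "t0 # C1" "[t1]"] Q2(2,3)
    unfolding Q_def by simp
  moreover have "\<bar>f t1 - f t0\<bar> powr p + pvar_list p f C1 \<le> pvar_list p f (t0 # C1 @ [t1]) + p * \<eta>"
    using "3.prems"(3) C1(2) p \<eta> by (intro pvar_list_detour_ge) auto
  moreover have "pvar_list p f C \<le> pvar_list p f C1 + pvar_list p f C2 + \<eta>"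
    unfolding C_split using p \<eta> C1(2) C2(2) by (intro pvar_list_append_small_le) auto
  ultimately have "pvar_list p f (t0 # t1 # P) + pvar_list p f C
      \<le> pvar_list p f Q + (p + 1) * \<eta> * length (t0 # t1 # P)"
    using Q2_ge by (simp add: algebra_simps)
  moreover have "Q \<noteq> []" "hd Q = t0" "last Q = last (t0 # t1 # P)"
    using Q2(2,4) unfolding Q_def by auto
  ultimately show ?case using \<open>sorted Q\<close> by auto
qed simp

lemma pvar_list_small_values:
  fixes f :: "real \<Rightarrow> real"
  assumes p: "1 \<le> p" and BV: "BV_p p f" and f: "\<forall>x\<in>{0..1}. f x \<in> {0..1}" and \<delta>: "0 < \<delta>"
  obtains \<eta> where "0 < \<eta>"
    "\<And>C. sorted C \<Longrightarrow> set C \<subseteq> {0..1} \<Longrightarrow> \<forall>c\<in>set C. f c < \<eta> \<Longrightarrow> pvar_list p f C < \<delta>"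
proof -
  obtain P where P: "successively (<) P" "P \<noteq> []" "hd P = 0" "last P = 1"
    and P_large: "Var_p p f - \<delta> / 2 < pvar_list p f P"
    using Var_p_less_pvar_list[of "\<delta> / 2"] \<delta> by auto
  have "sorted P"
    using P(1) by (simp add: successively_conv_sorted_wrt strict_sorted_imp_sorted)
  then have "set P \<subseteq> {0..1}" using sorted_set_subset_hd_last P(3,4) by metis
  define \<eta> where "\<eta> = min 1 (\<delta> / (2 * (p + 1) * length P))"
  have \<eta>: "0 < \<eta>" "\<eta> \<le> 1" unfolding \<eta>_def using p \<delta> P(2) by auto
  have \<eta>_P: "(p + 1) * \<eta> * length P \<le> \<delta> / 2"
  proof -
    have "0 < 2 * (p + 1) * length P" using p P(2) by simp
    moreover have "\<eta> \<le> \<delta> / (2 * (p + 1) * length P)" unfolding \<eta>_def by simp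
    ultimately have "\<eta> * (2 * (p + 1) * length P) \<le> \<delta>" by (simp add: pos_le_divide_eq)
    then show ?thesis by (simp add: algebra_simps)
  qed
  show ?thesis
  proof (rule that[OF \<eta>(1)])
    fix C assume C: "sorted C" "set C \<subseteq> {0..1}" "\<forall>c\<in>set C. f c < \<eta>"
    have "f ` set P \<subseteq> {0..1}" "set C \<subseteq> {hd P..last P}" "f ` set C \<subseteq> {0..<\<eta>}"
      using \<open>set P \<subseteq> {0..1}\<close> C f P(3,4) by auto
    then obtain Q where Q: "sorted Q" "Q \<noteq> []" "hd Q = 0" "last Q = 1"
      and Q_large: "pvar_list p f P + pvar_list p f C \<le> pvar_list p f Q + (p + 1) * \<eta> * length P"
      using pvar_list_refinement_ge[OF p \<eta> \<open>sorted P\<close> P(2) _ C(1)] P(3,4) by metis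
    have "pvar_list p f Q = pvar_list p f (remdups_adj Q)" by (simp add: pvar_list_remdups_adj)
    also have "\<dots> \<le> Var_p p f"
      using Q by (intro pvar_list_le_Var_p[OF BV] successively_less_remdups_adj) auto
    finally show "pvar_list p f C < \<delta>" using Q_large P_large \<eta>_P by linarith
  qed
qed

theorem lemma3p4:
  fixes p :: real and f :: "real \<Rightarrow> real"
  assumes "1 \<le> p"
    and "BV_p p f"
    and "\<forall>x\<in>{0..1}. f x \<in> {0..1}"
  shows "\<forall>\<epsilon>>0. \<exists>\<eta>>0. \<forall>(x :: nat \<Rightarrow> real) (m :: nat).
           (\<forall>j\<in>{1..m}. 0 \<le> x j \<and> x j \<le> 1) \<and> (\<forall>j\<in>{1..<m}. x j < x (Suc j))
           \<and> (\<forall>j\<in>{1..m}. f (x j) < \<eta>)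
           \<longrightarrow> (\<Sum>j\<in>{1..<m}. \<bar>f (x (Suc j)) - f (x j)\<bar> powr p) powr (1 / p) < \<epsilon>"
proof (intro allI impI)
  fix \<epsilon> :: real assume "0 < \<epsilon>"
  then have "0 < \<epsilon> powr p" by simp
  obtain \<eta> where "0 < \<eta>" and small:
    "\<And>C. sorted C \<Longrightarrow> set C \<subseteq> {0..1} \<Longrightarrow> \<forall>c\<in>set C. f c < \<eta> \<Longrightarrow> pvar_list p f C < \<epsilon> powr p"
    using pvar_list_small_values[OF assms \<open>0 < \<epsilon> powr p\<close>] by blast
  show "\<exists>\<eta>>0. \<forall>x m. (\<forall>j\<in>{1..m}. 0 \<le> x j \<and> x j \<le> 1) \<and> (\<forall>j\<in>{1..<m}. x j < x (Suc j))
           \<and> (\<forall>j\<in>{1..m}. f (x j) < \<eta>)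
           \<longrightarrow> (\<Sum>j\<in>{1..<m}. \<bar>f (x (Suc j)) - f (x j)\<bar> powr p) powr (1 / p) < \<epsilon>"
  proof (intro exI[of _ \<eta>] conjI allI impI \<open>0 < \<eta>\<close>)
    fix x :: "nat \<Rightarrow> real" and m :: nat
    assume x: "(\<forall>j\<in>{1..m}. 0 \<le> x j \<and> x j \<le> 1) \<and> (\<forall>j\<in>{1..<m}. x j < x (Suc j))
           \<and> (\<forall>j\<in>{1..m}. f (x j) < \<eta>)"
    have "sorted (map x [1..<Suc m])"
      using x by (auto simp: sorted_iff_nth_Suc nth_map_upt less_imp_le simp del: upt_Suc)
    moreover have "set (map x [1..<Suc m]) \<subseteq> {0..1}" "\<forall>c\<in>set (map x [1..<Suc m]). f c < \<eta>"
      using x by auto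
    ultimately have "pvar_list p f (map x [1..<Suc m]) < \<epsilon> powr p" by (rule small)
    then have "(\<Sum>j\<in>{1..<m}. \<bar>f (x (Suc j)) - f (x j)\<bar> powr p) < \<epsilon> powr p"
      unfolding pvar_list_map_upt by simp
    then have "(\<Sum>j\<in>{1..<m}. \<bar>f (x (Suc j)) - f (x j)\<bar> powr p) powr (1 / p) < (\<epsilon> powr p) powr (1 / p)"
      using assms(1) by (intro powr_less_mono2) (auto intro: sum_nonneg)
    then show "(\<Sum>j\<in>{1..<m}. \<bar>f (x (Suc j)) - f (x j)\<bar> powr p) powr (1 / p) < \<epsilon>"
      using assms(1) \<open>0 < \<epsilon>\<close> by (simp add: powr_powr)
  qed
qed

end
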